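(* Let $G$ be a finite group such that every column sum of its character table, $\Gamma_C(G)=\sum_{\chi\in\mathrm{Irr}(G)}\chi(C)$ for $C\in\mathrm{Conj}(G)$, is a nonnegative integer. Then (1) $s(G)\geq \Gamma_e(G)$; and (2) if in addition $G$ is totally orthogonal, then $s(G)\ge\Gamma_e(G)$, with $s(G)=\Gamma_e(G)$ if and only if $G$ is abelian.
   Context: For a finite group $G$, $\mathrm{Irr}(G)$ denotes the set of irreducible complex characters and $\mathrm{Conj}(G)$ the set of conjugacy classes; $s(G)$ is the sum of all entries of the character table, and $\Gamma_e(G)=\sum_{\chi\in\mathrm{Irr}(G)}\chi(e)$ is the sum of the irreducible character degrees. A finite group is totally orthogonal if every irreducible complex representation of it is realizable over $\mathbb{R}$. *)

theory Defs
  imports "HOL-Algebra.Group" "Jordan_Normal_Form.Matrix" "HOL-Library.Complex_Order"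
begin

definition conj_class :: "('g, 'b) monoid_scheme \<Rightarrow> 'g \<Rightarrow> 'g set" where
  "conj_class G x = {g \<otimes>\<^bsub>G\<^esub> x \<otimes>\<^bsub>G\<^esub> inv\<^bsub>G\<^esub> g | g. g \<in> carrier G}"

definition Conj :: "('g, 'b) monoid_scheme \<Rightarrow> 'g set set" where
  "Conj G = conj_class G ` carrier G"

definition mtrace :: "'a::comm_ring_1 mat \<Rightarrow> 'a" where
  "mtrace A = (\<Sum>i<dim_row A. A $$ (i, i))"

definition is_rep :: "('g, 'b) monoid_scheme \<Rightarrow> nat \<Rightarrow> ('g \<Rightarrow> complex mat) \<Rightarrow> bool" where
  "is_rep G n \<rho> \<longleftrightarrow>
     (\<forall>x\<in>carrier G. \<rho> x \<in> carrier_mat n n) \<and>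
     \<rho> \<one>\<^bsub>G\<^esub> = 1\<^sub>m n \<and>
     (\<forall>x\<in>carrier G. \<forall>y\<in>carrier G. \<rho> (x \<otimes>\<^bsub>G\<^esub> y) = \<rho> x * \<rho> y)"

definition is_subspace :: "nat \<Rightarrow> complex vec set \<Rightarrow> bool" where
  "is_subspace n W \<longleftrightarrow> W \<subseteq> carrier_vec n \<and> 0\<^sub>v n \<in> W \<and>
     (\<forall>v\<in>W. \<forall>w\<in>W. v + w \<in> W) \<and> (\<forall>c. \<forall>v\<in>W. c \<cdot>\<^sub>v v \<in> W)"

definition irreducible_rep :: "('g, 'b) monoid_scheme \<Rightarrow> nat \<Rightarrow> ('g \<Rightarrow> complex mat) \<Rightarrow> bool" where
  "irreducible_rep G n \<rho> \<longleftrightarrow> is_rep G n \<rho> \<and> n > 0 \<and>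
     (\<forall>W. is_subspace n W \<and> (\<forall>x\<in>carrier G. \<forall>w\<in>W. \<rho> x *\<^sub>v w \<in> W)
          \<longrightarrow> W = {0\<^sub>v n} \<or> W = carrier_vec n)"

definition character :: "('g, 'b) monoid_scheme \<Rightarrow> ('g \<Rightarrow> complex mat) \<Rightarrow> 'g \<Rightarrow> complex" where
  "character G \<rho> = (\<lambda>x\<in>carrier G. mtrace (\<rho> x))"

definition Irr :: "('g, 'b) monoid_scheme \<Rightarrow> ('g \<Rightarrow> complex) set" where
  "Irr G = {character G \<rho> | n \<rho>. irreducible_rep G n \<rho>}"

definition class_val :: "('g \<Rightarrow> complex) \<Rightarrow> 'g set \<Rightarrow> complex" where
  "class_val \<chi> C = \<chi> (SOME g. g \<in> C)"

definition Gamma :: "('g, 'b) monoid_scheme \<Rightarrow> 'g set \<Rightarrow> complex" where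
  "Gamma G C = (\<Sum>\<chi>\<in>Irr G. class_val \<chi> C)"

definition Gamma_e :: "('g, 'b) monoid_scheme \<Rightarrow> complex" where
  "Gamma_e G = (\<Sum>\<chi>\<in>Irr G. \<chi> \<one>\<^bsub>G\<^esub>)"

definition s_table :: "('g, 'b) monoid_scheme \<Rightarrow> complex" where
  "s_table G = (\<Sum>\<chi>\<in>Irr G. \<Sum>C\<in>Conj G. class_val \<chi> C)"

definition realizable_over_R :: "('g, 'b) monoid_scheme \<Rightarrow> nat \<Rightarrow> ('g \<Rightarrow> complex mat) \<Rightarrow> bool" where
  "realizable_over_R G n \<rho> \<longleftrightarrow>
     (\<exists>P Q. P \<in> carrier_mat n n \<and> Q \<in> carrier_mat n n \<and> P * Q = 1\<^sub>m n \<and> Q * P = 1\<^sub>m n \<and>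
        (\<forall>x\<in>carrier G. \<forall>i<n. \<forall>j<n. (P * \<rho> x * Q) $$ (i, j) \<in> \<real>))"

definition totally_orthogonal :: "('g, 'b) monoid_scheme \<Rightarrow> bool" where
  "totally_orthogonal G \<longleftrightarrow> (\<forall>n \<rho>. irreducible_rep G n \<rho> \<longrightarrow> realizable_over_R G n \<rho>)"

end

(*
  Splitting off the column of the identity, s(G) = Gamma_e(G) + (sum of Gamma_C(G) over C \<noteq> {1}),
  and by hypothesis every remaining summand is a natural number.  Hence s(G) \<ge> Gamma_e(G), with
  equality iff Gamma_C(G) = 0 for every nontrivial class C.

  If these column sums vanish, pairing the column-sum function with an irreducible character psi
  and using Schur's orthogonality relations gives Gamma_e(G) * psi(1) = |G|.  For the trivial
  character this says Gamma_e(G) = |G|, so every irreducible character is linear; they all take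
  the value 1 on a commutator, whose column sum is then |Irr(G)| \<noteq> 0, so the commutator is
  trivial and G is abelian.  Conversely, for G abelian the irreducible characters are exactly the
  linear characters, these separate the points of G (a linear character of a subgroup H extends
  to H<y> by sending y to a root of the appropriate order), and multiplying by a linear character
  psi with psi(g) \<noteq> 1 permutes Irr(G), which forces the column sum at g to vanish.
*)

theory Submission
  imports Defs "Jordan_Normal_Form.Spectral_Radius" "Jordan_Normal_Form.Matrix_Kernel"
    "HOL-Algebra.Multiplicative_Group"
begin

section \<open>Matrices\<close>

lemma mult_mat_vec_unit_vec:
  assumes A: "A \<in> carrier_mat m n" and i: "i < m" and j: "j < n"
  shows "(A *\<^sub>v unit_vec n j) $ i = (A $$ (i, j) :: 'a :: comm_ring_1)"
proof -
  have "(A *\<^sub>v unit_vec n j) $ i = (\<Sum>k\<in>{0..<n}. A $$ (i, k) * (if k = j then 1 else 0))"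
    using A i j by (simp add: scalar_prod_def)
  also have "\<dots> = A $$ (i, j)" using j by (simp add: if_distrib cong: if_cong)
  finally show ?thesis .
qed

lemma eq_mat_by_mult_vec:
  assumes A: "A \<in> carrier_mat m n" and B: "B \<in> carrier_mat m n"
    and eq: "\<And>v. v \<in> carrier_vec n \<Longrightarrow> A *\<^sub>v v = B *\<^sub>v v"
  shows "A = (B :: 'a :: comm_ring_1 mat)"
proof (rule eq_matI)
  fix i j assume "i < dim_row B" and "j < dim_col B"
  then have i: "i < m" and j: "j < n" using B by auto
  show "A $$ (i, j) = B $$ (i, j)"
    using mult_mat_vec_unit_vec[OF A i j] mult_mat_vec_unit_vec[OF B i j] eq[of "unit_vec n j"]
    by simp
qed (use A B in auto)

lemma eq_vec_of_minus_eq_zero: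
  assumes v: "v \<in> carrier_vec n" and w: "w \<in> carrier_vec n" and vw: "v - w = 0\<^sub>v n"
  shows "v = (w :: 'a :: ab_group_add vec)"
proof (rule eq_vecI)
  fix i assume "i < dim_vec w"
  then have i: "i < n" using w by simp
  have "v $ i - w $ i = (v - w) $ i" using i v w by simp
  also have "\<dots> = 0" using i vw by simp
  finally show "v $ i = w $ i" by simp
qed (use v w in simp)

lemma mtrace_mult_comm:
  assumes A: "A \<in> carrier_mat n m" and B: "B \<in> carrier_mat m n"
  shows "mtrace (A * B) = mtrace (B * (A :: 'a :: comm_ring_1 mat))"
proof -
  have "mtrace (A * B) = (\<Sum>i<n. \<Sum>k<m. A $$ (i, k) * B $$ (k, i))"
    using A B by (simp add: mtrace_def scalar_prod_def atLeast0LessThan)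
  also have "\<dots> = (\<Sum>k<m. \<Sum>i<n. B $$ (k, i) * A $$ (i, k))"
    by (subst sum.swap) (simp add: mult.commute)
  also have "\<dots> = mtrace (B * A)"
    using A B by (simp add: mtrace_def scalar_prod_def atLeast0LessThan)
  finally show ?thesis .
qed

lemma mtrace_smult_one_mat: "mtrace (c \<cdot>\<^sub>m 1\<^sub>m n) = c * of_nat n"
  by (simp add: mtrace_def)

lemma mtrace_similar:
  assumes A: "A \<in> carrier_mat m m" and B: "B \<in> carrier_mat n n"
    and T: "T \<in> carrier_mat m n" and S: "S \<in> carrier_mat n m"
    and TS: "T * S = 1\<^sub>m m" and ST: "S * T = 1\<^sub>m n" and AT: "A * T = T * B"
  shows "mtrace A = mtrace (B :: 'a :: comm_ring_1 mat)"
proof -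
  have "mtrace A = mtrace (A * (T * S))" using TS A by simp
  also have "\<dots> = mtrace ((A * T) * S)" using A T S by (simp add: assoc_mult_mat)
  also have "\<dots> = mtrace (T * (B * S))" using B T S AT by (simp add: assoc_mult_mat)
  also have "\<dots> = mtrace ((B * S) * T)" using B T S by (intro mtrace_mult_comm) auto
  also have "\<dots> = mtrace B" using ST B S T by simp
  finally show ?thesis .
qed

lemma is_subspace_mat_kernel:
  assumes "T \<in> carrier_mat m n"
  shows "is_subspace n (mat_kernel T)"
  using assms unfolding is_subspace_def mat_kernel_def
  by (auto simp: mult_add_distrib_mat_vec mult_mat_vec)

lemma is_subspace_mat_image:
  assumes T: "T \<in> carrier_mat m n"
  shows "is_subspace m ((*\<^sub>v) T ` carrier_vec n)"
  unfolding is_subspace_def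
proof (intro conjI ballI allI)
  show "(*\<^sub>v) T ` carrier_vec n \<subseteq> carrier_vec m" using T by auto
  show "0\<^sub>v m \<in> (*\<^sub>v) T ` carrier_vec n"
    using T by (intro image_eqI[of _ _ "0\<^sub>v n"]) auto
next
  fix a b assume "a \<in> (*\<^sub>v) T ` carrier_vec n" "b \<in> (*\<^sub>v) T ` carrier_vec n"
  then obtain a' b' where "a' \<in> carrier_vec n" "a = T *\<^sub>v a'" "b' \<in> carrier_vec n" "b = T *\<^sub>v b'"
    by auto
  then show "a + b \<in> (*\<^sub>v) T ` carrier_vec n"
    by (intro image_eqI[of _ _ "a' + b'"]) (auto simp: mult_add_distrib_mat_vec[OF T])
next
  fix c a assume "a \<in> (*\<^sub>v) T ` carrier_vec n"
  then obtain a' where "a' \<in> carrier_vec n" "a = T *\<^sub>v a'" by auto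
  then show "c \<cdot>\<^sub>v a \<in> (*\<^sub>v) T ` carrier_vec n"
    by (intro image_eqI[of _ _ "c \<cdot>\<^sub>v a'"]) (auto simp: mult_mat_vec[OF T])
qed

lemma is_subspace_line:
  assumes v: "v \<in> carrier_vec n"
  shows "is_subspace n {a \<cdot>\<^sub>v v | a. True}"
  unfolding is_subspace_def
proof (intro conjI ballI allI)
  show "{a \<cdot>\<^sub>v v | a. True} \<subseteq> carrier_vec n" using v by auto
  have "0\<^sub>v n = 0 \<cdot>\<^sub>v v" using v by (intro eq_vecI) auto
  then show "0\<^sub>v n \<in> {a \<cdot>\<^sub>v v | a. True}" by blast
next
  fix w u assume "w \<in> {a \<cdot>\<^sub>v v | a. True}" "u \<in> {a \<cdot>\<^sub>v v | a. True}"
  then obtain a b where "w = a \<cdot>\<^sub>v v" "u = b \<cdot>\<^sub>v v" by auto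
  moreover have "a \<cdot>\<^sub>v v + b \<cdot>\<^sub>v v = (a + b) \<cdot>\<^sub>v v" using v by (simp add: add_smult_distrib_vec)
  ultimately show "w + u \<in> {a \<cdot>\<^sub>v v | a. True}" by auto
next
  fix c w assume "w \<in> {a \<cdot>\<^sub>v v | a. True}"
  then obtain a where "w = a \<cdot>\<^sub>v v" by auto
  then show "c \<cdot>\<^sub>v w \<in> {a \<cdot>\<^sub>v v | a. True}" by (auto simp: smult_smult_assoc)
qed

lemma mat_inverse_of_bijective:
  fixes T :: "'a :: comm_ring_1 mat"
  assumes T: "T \<in> carrier_mat m n"
    and ker: "mat_kernel T = {0\<^sub>v n}" and img: "(*\<^sub>v) T ` carrier_vec n = carrier_vec m"
  obtains S where "S \<in> carrier_mat n m" and "T * S = 1\<^sub>m m" and "S * T = 1\<^sub>m n"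
proof -
  have inj: "v = w" if v: "v \<in> carrier_vec n" and w: "w \<in> carrier_vec n"
    and eq: "T *\<^sub>v v = T *\<^sub>v w" for v w
  proof -
    have "T *\<^sub>v (v - w) = 0\<^sub>v m" using mult_minus_distrib_mat_vec[OF T v w] eq T w by simp
    then have "v - w \<in> mat_kernel T" using T v w by (auto intro: mat_kernelI)
    then show "v = w" using ker eq_vec_of_minus_eq_zero v w by blast
  qed
  have "\<exists>u. u \<in> carrier_vec n \<and> T *\<^sub>v u = unit_vec m j" for j
    using img by (metis image_iff unit_vec_carrier)
  then obtain u where u: "\<And>j. u j \<in> carrier_vec n \<and> T *\<^sub>v u j = unit_vec m j"
    by metis
  define S where "S = mat n m (\<lambda>(i, j). u j $ i)"
  have S: "S \<in> carrier_mat n m" unfolding S_def by simp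
  have col: "col S j = u j" if "j < m" for j
    using u[of j] that by (intro eq_vecI) (auto simp: S_def)
  have TS: "T * S = 1\<^sub>m m"
  proof (rule eq_matI)
    fix i j assume "i < dim_row (1\<^sub>m m)" and "j < dim_col (1\<^sub>m m)"
    then have "(T * S) $$ (i, j) = (T *\<^sub>v u j) $ i" using T S col by simp
    then show "(T * S) $$ (i, j) = 1\<^sub>m m $$ (i, j)"
      using u[of j] \<open>i < dim_row (1\<^sub>m m)\<close> \<open>j < dim_col (1\<^sub>m m)\<close> by simp
  qed (use T S in auto)
  have "S * T = 1\<^sub>m n"
  proof (rule eq_mat_by_mult_vec)
    fix v :: "'a vec" assume v: "v \<in> carrier_vec n"
    have "T * (S * T) = T" using TS S T by (metis assoc_mult_mat left_mult_one_mat)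
    then have "T *\<^sub>v ((S * T) *\<^sub>v v) = T *\<^sub>v v"
      using S T v by (metis assoc_mult_mat_vec mult_carrier_mat)
    then have "(S * T) *\<^sub>v v = v" using inj S T v by (meson mult_carrier_mat mult_mat_vec_carrier)
    then show "(S * T) *\<^sub>v v = 1\<^sub>m n *\<^sub>v v" using v by simp
  qed (use S T in auto)
  with S TS that show ?thesis by blast
qed

section \<open>Representations and Schur's lemma\<close>

definition invariant_subspace ::
  "('g, 'b) monoid_scheme \<Rightarrow> nat \<Rightarrow> ('g \<Rightarrow> complex mat) \<Rightarrow> complex vec set \<Rightarrow> bool" where
  "invariant_subspace G n \<rho> W \<longleftrightarrow> is_subspace n W \<and> (\<forall>x\<in>carrier G. \<forall>w\<in>W. \<rho> x *\<^sub>v w \<in> W)"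

definition intertwines ::
  "('g, 'b) monoid_scheme \<Rightarrow> ('g \<Rightarrow> complex mat) \<Rightarrow> ('g \<Rightarrow> complex mat) \<Rightarrow> complex mat \<Rightarrow> bool" where
  "intertwines G \<sigma> \<rho> T \<longleftrightarrow> (\<forall>x\<in>carrier G. \<sigma> x * T = T * \<rho> x)"

context group
begin

lemma rep_carrier: "is_rep G n \<rho> \<Longrightarrow> x \<in> carrier G \<Longrightarrow> \<rho> x \<in> carrier_mat n n"
  unfolding is_rep_def by auto

lemma rep_mult: "is_rep G n \<rho> \<Longrightarrow> x \<in> carrier G \<Longrightarrow> y \<in> carrier G \<Longrightarrow> \<rho> (x \<otimes> y) = \<rho> x * \<rho> y"
  unfolding is_rep_def by auto

lemma rep_one: "is_rep G n \<rho> \<Longrightarrow> \<rho> \<one> = 1\<^sub>m n"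
  unfolding is_rep_def by auto

lemma rep_inv_mult: "is_rep G n \<rho> \<Longrightarrow> x \<in> carrier G \<Longrightarrow> \<rho> (inv x) * \<rho> x = 1\<^sub>m n"
  by (metis rep_mult rep_one inv_closed l_inv)

lemma irreducible_repD:
  assumes "irreducible_rep G n \<rho>"
  shows "is_rep G n \<rho>" and "n > 0"
    and "invariant_subspace G n \<rho> W \<Longrightarrow> W = {0\<^sub>v n} \<or> W = carrier_vec n"
  using assms unfolding irreducible_rep_def invariant_subspace_def by auto

lemma Irr_extensional: "\<chi> \<in> Irr G \<Longrightarrow> \<chi> \<in> extensional (carrier G)"
  unfolding Irr_def character_def by auto

lemma character_one: "is_rep G n \<rho> \<Longrightarrow> character G \<rho> \<one> = of_nat n"
  by (simp add: character_def rep_one mtrace_def)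

lemma character_conj:
  assumes r: "is_rep G n \<rho>" and g: "g \<in> carrier G" and h: "h \<in> carrier G"
  shows "character G \<rho> (h \<otimes> g \<otimes> inv h) = character G \<rho> g"
proof -
  have c: "\<rho> h \<in> carrier_mat n n" "\<rho> g \<in> carrier_mat n n" "\<rho> (inv h) \<in> carrier_mat n n"
    using r g h by (auto intro: rep_carrier)
  have "mtrace (\<rho> (h \<otimes> g \<otimes> inv h)) = mtrace (\<rho> h * (\<rho> g * \<rho> (inv h)))"
    using r g h c by (simp add: rep_mult)
  also have "\<dots> = mtrace ((\<rho> g * \<rho> (inv h)) * \<rho> h)"
    using c by (intro mtrace_mult_comm) auto
  also have "\<dots> = mtrace (\<rho> g)"
    using c r h by (simp add: rep_inv_mult)
  finally show ?thesis using g h by (simp add: character_def)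
qed

lemma invariant_subspace_mat_kernel:
  assumes r: "is_rep G n \<rho>" and s: "is_rep G m \<sigma>" and T: "T \<in> carrier_mat m n"
    and int: "intertwines G \<sigma> \<rho> T"
  shows "invariant_subspace G n \<rho> (mat_kernel T)"
  unfolding invariant_subspace_def
proof (intro conjI ballI)
  show "is_subspace n (mat_kernel T)" using is_subspace_mat_kernel[OF T] .
  fix x w assume x: "x \<in> carrier G" and w: "w \<in> mat_kernel T"
  have rx: "\<rho> x \<in> carrier_mat n n" and sx: "\<sigma> x \<in> carrier_mat m m"
    using rep_carrier r s x by auto
  have wc: "w \<in> carrier_vec n" and Tw: "T *\<^sub>v w = 0\<^sub>v m"
    using mat_kernelD[OF T w] by auto
  have "T *\<^sub>v (\<rho> x *\<^sub>v w) = (\<sigma> x * T) *\<^sub>v w"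
    using T rx wc int x by (simp add: intertwines_def)
  also have "\<dots> = 0\<^sub>v m" using T sx wc Tw by auto
  finally show "\<rho> x *\<^sub>v w \<in> mat_kernel T" using T rx wc by (auto intro: mat_kernelI)
qed

lemma invariant_subspace_mat_image:
  assumes r: "is_rep G n \<rho>" and s: "is_rep G m \<sigma>" and T: "T \<in> carrier_mat m n"
    and int: "intertwines G \<sigma> \<rho> T"
  shows "invariant_subspace G m \<sigma> ((*\<^sub>v) T ` carrier_vec n)"
  unfolding invariant_subspace_def
proof (intro conjI ballI)
  show "is_subspace m ((*\<^sub>v) T ` carrier_vec n)" using is_subspace_mat_image[OF T] .
  fix x w assume x: "x \<in> carrier G" and "w \<in> (*\<^sub>v) T ` carrier_vec n"
  then obtain v where v: "v \<in> carrier_vec n" and w: "w = T *\<^sub>v v" by auto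
  have rx: "\<rho> x \<in> carrier_mat n n" and sx: "\<sigma> x \<in> carrier_mat m m"
    using rep_carrier r s x by auto
  have "\<sigma> x *\<^sub>v w = (\<sigma> x * T) *\<^sub>v v" using T sx v w by simp
  also have "\<dots> = (T * \<rho> x) *\<^sub>v v" using int x by (simp add: intertwines_def)
  also have "\<dots> = T *\<^sub>v (\<rho> x *\<^sub>v v)" using T rx v by simp
  finally show "\<sigma> x *\<^sub>v w \<in> (*\<^sub>v) T ` carrier_vec n" using rx v by auto
qed

lemma irreducible_rep_commutant_scalar:
  assumes irr: "irreducible_rep G n \<rho>" and T: "T \<in> carrier_mat n n"
    and int: "intertwines G \<rho> \<rho> T"
  obtains c where "T = c \<cdot>\<^sub>m 1\<^sub>m n"
proof -
  note r = irreducible_repD(1)[OF irr]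
  obtain c where "eigenvalue T c"
    using spectrum_non_empty[OF T irreducible_repD(2)[OF irr]] unfolding spectrum_def by auto
  then obtain v where v: "v \<in> carrier_vec n" "v \<noteq> 0\<^sub>v n" "T *\<^sub>v v = c \<cdot>\<^sub>v v"
    unfolding eigenvalue_def eigenvector_def using T by auto
  define D where "D = T - c \<cdot>\<^sub>m 1\<^sub>m n"
  have D: "D \<in> carrier_mat n n" unfolding D_def by (simp add: minus_carrier_mat)
  have Dv: "D *\<^sub>v w = T *\<^sub>v w - c \<cdot>\<^sub>v w" if "w \<in> carrier_vec n" for w
  proof -
    have "(c \<cdot>\<^sub>m 1\<^sub>m n) *\<^sub>v w = c \<cdot>\<^sub>v w" using that by auto
    then show ?thesis using T that by (simp add: D_def minus_mult_distrib_mat_vec)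
  qed
  have "\<rho> x * D = D * \<rho> x" if x: "x \<in> carrier G" for x
  proof -
    have rx: "\<rho> x \<in> carrier_mat n n" using rep_carrier[OF r x] .
    have "\<rho> x * D = \<rho> x * T - c \<cdot>\<^sub>m \<rho> x"
      using T rx mult_smult_distrib[OF rx one_carrier_mat]
      by (simp add: D_def mult_minus_distrib_mat)
    also have "\<dots> = T * \<rho> x - c \<cdot>\<^sub>m \<rho> x" using int x by (simp add: intertwines_def)
    also have "\<dots> = D * \<rho> x"
      using T rx mult_smult_assoc_mat[OF one_carrier_mat rx]
      by (simp add: D_def minus_mult_distrib_mat)
    finally show ?thesis .
  qed
  then have "intertwines G \<rho> \<rho> D" unfolding intertwines_def by blast
  then have inv: "invariant_subspace G n \<rho> (mat_kernel D)"
    using invariant_subspace_mat_kernel[OF r r D] by blast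
  have "v \<in> mat_kernel D" using D v Dv by (auto intro: mat_kernelI)
  then have ker: "mat_kernel D = carrier_vec n"
    using irreducible_repD(3)[OF irr inv] v by auto
  have "T = c \<cdot>\<^sub>m 1\<^sub>m n"
  proof (rule eq_mat_by_mult_vec[OF T])
    fix w :: "complex vec" assume w: "w \<in> carrier_vec n"
    then have "T *\<^sub>v w - c \<cdot>\<^sub>v w = 0\<^sub>v n" using ker D Dv mat_kernelD by metis
    then have "T *\<^sub>v w = c \<cdot>\<^sub>v w" by (rule eq_vec_of_minus_eq_zero[rotated 2]) (use T w in auto)
    then show "T *\<^sub>v w = (c \<cdot>\<^sub>m 1\<^sub>m n) *\<^sub>v w" using w by auto
  qed auto
  then show ?thesis by (rule that)
qed

lemma character_eq_of_intertwiner: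
  assumes irr_\<rho>: "irreducible_rep G n \<rho>" and irr_\<sigma>: "irreducible_rep G m \<sigma>"
    and T: "T \<in> carrier_mat m n" and int: "intertwines G \<sigma> \<rho> T" and nz: "T \<noteq> 0\<^sub>m m n"
  shows "character G \<sigma> = character G \<rho>"
proof -
  note r = irreducible_repD(1)[OF irr_\<rho>] and s = irreducible_repD(1)[OF irr_\<sigma>]
  have "mat_kernel T \<noteq> carrier_vec n"
  proof
    assume "mat_kernel T = carrier_vec n"
    then have "T *\<^sub>v v = 0\<^sub>v m" if "v \<in> carrier_vec n" for v using mat_kernelD[OF T] that by blast
    then have "T = 0\<^sub>m m n" using T by (intro eq_mat_by_mult_vec) auto
    with nz show False ..
  qed
  then have ker: "mat_kernel T = {0\<^sub>v n}"
    using irreducible_repD(3)[OF irr_\<rho> invariant_subspace_mat_kernel[OF r s T int]] by blast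
  have "(*\<^sub>v) T ` carrier_vec n \<noteq> {0\<^sub>v m}"
  proof
    assume "(*\<^sub>v) T ` carrier_vec n = {0\<^sub>v m}"
    then have "T *\<^sub>v v = 0\<^sub>v m" if "v \<in> carrier_vec n" for v using that by blast
    then have "T = 0\<^sub>m m n" using T by (intro eq_mat_by_mult_vec) auto
    with nz show False ..
  qed
  then have img: "(*\<^sub>v) T ` carrier_vec n = carrier_vec m"
    using irreducible_repD(3)[OF irr_\<sigma> invariant_subspace_mat_image[OF r s T int]] by blast
  obtain S where S: "S \<in> carrier_mat n m" and TS: "T * S = 1\<^sub>m m" and ST: "S * T = 1\<^sub>m n"
    using mat_inverse_of_bijective[OF T ker img] .
  show ?thesis
  proof
    fix x show "character G \<sigma> x = character G \<rho> x"
    proof (cases "x \<in> carrier G")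
      case True
      then show ?thesis
        using mtrace_similar[OF rep_carrier[OF s True] rep_carrier[OF r True] T S TS ST] int
        by (simp add: character_def intertwines_def)
    qed (simp add: character_def)
  qed
qed

end

section \<open>Orthogonality of irreducible characters\<close>

definition mat_sum :: "nat \<Rightarrow> nat \<Rightarrow> 'i set \<Rightarrow> ('i \<Rightarrow> 'a :: comm_monoid_add mat) \<Rightarrow> 'a mat" where
  "mat_sum m n I M = mat m n (\<lambda>(i, l). \<Sum>g\<in>I. M g $$ (i, l))"

lemma mat_sum_carrier [simp]: "mat_sum m n I M \<in> carrier_mat m n"
  by (simp add: mat_sum_def)

lemma dim_mat_sum [simp]: "dim_row (mat_sum m n I M) = m" "dim_col (mat_sum m n I M) = n"
  by (simp_all add: mat_sum_def)

lemma index_mat_sum [simp]: "i < m \<Longrightarrow> l < n \<Longrightarrow> mat_sum m n I M $$ (i, l) = (\<Sum>g\<in>I. M g $$ (i, l))"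
  by (simp add: mat_sum_def)

lemma mult_mat_sum:
  assumes B: "B \<in> carrier_mat p m" and M: "\<And>g. g \<in> I \<Longrightarrow> M g \<in> carrier_mat m n"
  shows "B * mat_sum m n I M = mat_sum p n I (\<lambda>g. B * M g :: 'a :: comm_ring_1 mat)"
proof (rule eq_matI)
  fix i l assume "i < dim_row (mat_sum p n I (\<lambda>g. B * M g))" "l < dim_col (mat_sum p n I (\<lambda>g. B * M g))"
  then have i: "i < p" and l: "l < n" by auto
  have "(B * mat_sum m n I M) $$ (i, l) = (\<Sum>c<m. B $$ (i, c) * (\<Sum>g\<in>I. M g $$ (c, l)))"
    using B i l by (simp add: scalar_prod_def atLeast0LessThan)
  also have "\<dots> = (\<Sum>g\<in>I. \<Sum>c<m. B $$ (i, c) * M g $$ (c, l))"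
    by (simp add: sum_distrib_left sum.swap[of _ I])
  also have "\<dots> = (\<Sum>g\<in>I. (B * M g) $$ (i, l))"
  proof (intro sum.cong refl)
    fix g assume "g \<in> I"
    then have "M g \<in> carrier_mat m n" by (rule M)
    then show "(\<Sum>c<m. B $$ (i, c) * M g $$ (c, l)) = (B * M g) $$ (i, l)"
      using B i l by (simp add: scalar_prod_def atLeast0LessThan carrier_matD)
  qed
  finally show "(B * mat_sum m n I M) $$ (i, l) = mat_sum p n I (\<lambda>g. B * M g) $$ (i, l)"
    using i l by simp
qed (use B in auto)

lemma mat_sum_mult:
  assumes C: "C \<in> carrier_mat n q" and M: "\<And>g. g \<in> I \<Longrightarrow> M g \<in> carrier_mat m n"
  shows "mat_sum m n I M * C = mat_sum m q I (\<lambda>g. M g * C :: 'a :: comm_ring_1 mat)"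
proof (rule eq_matI)
  fix i l assume "i < dim_row (mat_sum m q I (\<lambda>g. M g * C))" "l < dim_col (mat_sum m q I (\<lambda>g. M g * C))"
  then have i: "i < m" and l: "l < q" by auto
  have "(mat_sum m n I M * C) $$ (i, l) = (\<Sum>c<n. (\<Sum>g\<in>I. M g $$ (i, c)) * C $$ (c, l))"
    using C i l by (simp add: scalar_prod_def atLeast0LessThan)
  also have "\<dots> = (\<Sum>g\<in>I. \<Sum>c<n. M g $$ (i, c) * C $$ (c, l))"
    by (simp add: sum_distrib_right sum.swap[of _ I])
  also have "\<dots> = (\<Sum>g\<in>I. (M g * C) $$ (i, l))"
  proof (intro sum.cong refl)
    fix g assume "g \<in> I"
    then have "M g \<in> carrier_mat m n" by (rule M)
    then show "(\<Sum>c<n. M g $$ (i, c) * C $$ (c, l)) = (M g * C) $$ (i, l)"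
      using C i l by (simp add: scalar_prod_def atLeast0LessThan carrier_matD)
  qed
  finally show "(mat_sum m n I M * C) $$ (i, l) = mat_sum m q I (\<lambda>g. M g * C) $$ (i, l)"
    using i l by simp
qed (use C in auto)

definition matrix_unit :: "nat \<Rightarrow> nat \<Rightarrow> nat \<Rightarrow> nat \<Rightarrow> 'a :: comm_ring_1 mat" where
  "matrix_unit m n j k = mat m n (\<lambda>(a, b). if a = j \<and> b = k then 1 else 0)"

lemma matrix_unit_carrier [simp]: "matrix_unit m n j k \<in> carrier_mat m n"
  by (simp add: matrix_unit_def)

lemma dim_matrix_unit [simp]: "dim_row (matrix_unit m n j k) = m" "dim_col (matrix_unit m n j k) = n"
  by (simp_all add: matrix_unit_def)

lemma index_mult_matrix_unit_mult:
  assumes A: "A \<in> carrier_mat m m'" and B: "B \<in> carrier_mat n' n"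
    and j: "j < m'" and k: "k < n'" and i: "i < m" and l: "l < n"
  shows "(A * matrix_unit m' n' j k * B) $$ (i, l) = A $$ (i, j) * (B $$ (k, l) :: 'a :: comm_ring_1)"
proof -
  have AE: "(A * matrix_unit m' n' j k) $$ (i, b) = (if b = k then A $$ (i, j) else 0)" if b: "b < n'" for b
  proof -
    have "(A * matrix_unit m' n' j k) $$ (i, b)
        = (\<Sum>a\<in>{0..<m'}. A $$ (i, a) * (if a = j \<and> b = k then 1 else 0))"
      using A i b by (simp add: scalar_prod_def matrix_unit_def)
    also have "\<dots> = (if b = k then A $$ (i, j) else 0)"
      using j by (cases "b = k") (simp_all add: if_distrib cong: if_cong)
    finally show ?thesis .
  qed
  have "(A * matrix_unit m' n' j k * B) $$ (i, l)
      = (\<Sum>b\<in>{0..<n'}. (A * matrix_unit m' n' j k) $$ (i, b) * B $$ (b, l))"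
    using A B i l by (simp add: scalar_prod_def carrier_matD matrix_unit_def)
  also have "\<dots> = (\<Sum>b\<in>{0..<n'}. (if b = k then A $$ (i, j) * B $$ (b, l) else 0))"
    using AE by (intro sum.cong) auto
  also have "\<dots> = A $$ (i, j) * B $$ (k, l)"
    using k by (simp add: if_distrib cong: if_cong)
  finally show ?thesis .
qed

definition group_avg ::
  "('g, 'b) monoid_scheme \<Rightarrow> ('g \<Rightarrow> complex mat) \<Rightarrow> complex mat \<Rightarrow> ('g \<Rightarrow> complex mat) \<Rightarrow> complex mat" where
  "group_avg G \<sigma> X \<rho> = mat_sum (dim_row X) (dim_col X) (carrier G) (\<lambda>g. \<sigma> g * X * \<rho> (inv\<^bsub>G\<^esub> g))"

definition char_pairing :: "('g, 'b) monoid_scheme \<Rightarrow> ('g \<Rightarrow> complex) \<Rightarrow> ('g \<Rightarrow> complex) \<Rightarrow> complex" where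
  "char_pairing G \<chi> \<psi> = (\<Sum>g\<in>carrier G. \<chi> g * \<psi> (inv\<^bsub>G\<^esub> g))"

context group
begin

lemma sum_left_translate:
  assumes h: "h \<in> carrier G"
  shows "(\<Sum>g\<in>carrier G. f (h \<otimes> g)) = (\<Sum>g\<in>carrier G. f g)"
proof (rule sum.reindex_bij_witness[of _ "\<lambda>g. inv h \<otimes> g" "\<lambda>g. h \<otimes> g"])
  fix a assume a: "a \<in> carrier G"
  show "inv h \<otimes> (h \<otimes> a) = a" and "h \<otimes> (inv h \<otimes> a) = a"
    using a h by (simp_all add: m_assoc[symmetric])
qed (use h in auto)

lemma group_avg_carrier: "X \<in> carrier_mat m n \<Longrightarrow> group_avg G \<sigma> X \<rho> \<in> carrier_mat m n"
  by (simp add: group_avg_def)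

lemma dim_group_avg [simp]:
  "dim_row (group_avg G \<sigma> X \<rho>) = dim_row X" "dim_col (group_avg G \<sigma> X \<rho>) = dim_col X"
  by (simp_all add: group_avg_def)

lemma intertwines_group_avg:
  assumes s: "is_rep G m \<sigma>" and r: "is_rep G n \<rho>" and X: "X \<in> carrier_mat m n"
  shows "intertwines G \<sigma> \<rho> (group_avg G \<sigma> X \<rho>)"
  unfolding intertwines_def
proof
  fix h assume h: "h \<in> carrier G"
  have M: "\<sigma> g * X * \<rho> (inv g) \<in> carrier_mat m n" if "g \<in> carrier G" for g
    using that rep_carrier[OF s] rep_carrier[OF r] X by (meson inv_closed mult_carrier_mat)
  have sh: "\<sigma> h \<in> carrier_mat m m" and rh: "\<rho> h \<in> carrier_mat n n"
    using rep_carrier s r h by auto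
  define F where "F = (\<lambda>g. \<sigma> g * X * \<rho> (inv g) * \<rho> h)"
  have translate: "\<sigma> h * (\<sigma> g * X * \<rho> (inv g)) = F (h \<otimes> g)" if g: "g \<in> carrier G" for g
  proof -
    have sg: "\<sigma> g \<in> carrier_mat m m" and rig: "\<rho> (inv g) \<in> carrier_mat n n"
      and rihg: "\<rho> (inv (h \<otimes> g)) \<in> carrier_mat n n"
      using rep_carrier s r g h by auto
    have "inv (h \<otimes> g) \<otimes> h = inv g" using g h by (simp add: inv_mult_group m_assoc)
    moreover have "\<rho> (inv (h \<otimes> g)) * \<rho> h = \<rho> (inv (h \<otimes> g) \<otimes> h)" using rep_mult[OF r] g h by simp
    ultimately have "\<rho> (inv (h \<otimes> g)) * \<rho> h = \<rho> (inv g)" by simp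
    define P where "P = \<sigma> h * \<sigma> g * X"
    have P: "P \<in> carrier_mat m n" using sh sg X by (simp add: P_def)
    have "F (h \<otimes> g) = P * \<rho> (inv (h \<otimes> g)) * \<rho> h"
      unfolding F_def P_def using g h by (simp add: rep_mult[OF s])
    also have "\<dots> = P * \<rho> (inv g)"
      using assoc_mult_mat[OF P rihg rh] \<open>\<rho> (inv (h \<otimes> g)) * \<rho> h = \<rho> (inv g)\<close> by simp
    finally have "F (h \<otimes> g) = P * \<rho> (inv g)" .
    moreover have "\<sigma> h * \<sigma> g * X = \<sigma> h * (\<sigma> g * X)" by (rule assoc_mult_mat[OF sh sg X])
    moreover have "\<sigma> h * (\<sigma> g * X) * \<rho> (inv g) = \<sigma> h * (\<sigma> g * X * \<rho> (inv g))"
      by (rule assoc_mult_mat[OF sh _ rig]) (use sg X in simp)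
    ultimately show ?thesis unfolding P_def by simp
  qed
  have "\<sigma> h * group_avg G \<sigma> X \<rho> = mat_sum m n (carrier G) (\<lambda>g. \<sigma> h * (\<sigma> g * X * \<rho> (inv g)))"
    unfolding group_avg_def using X mult_mat_sum[OF sh M] by simp
  also have "\<dots> = mat_sum m n (carrier G) (\<lambda>g. F (h \<otimes> g))"
    unfolding mat_sum_def using translate by (intro cong_mat refl) (auto intro!: sum.cong)
  also have "\<dots> = mat_sum m n (carrier G) F"
  proof -
    have "(\<Sum>g\<in>carrier G. F (h \<otimes> g) $$ (i, l)) = (\<Sum>g\<in>carrier G. F g $$ (i, l))" for i l
      using sum_left_translate[OF h, of "\<lambda>g. F g $$ (i, l)"] by simp
    then show ?thesis unfolding mat_sum_def by simp
  qed
  also have "\<dots> = group_avg G \<sigma> X \<rho> * \<rho> h"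
    unfolding group_avg_def F_def using X mat_sum_mult[where M = "\<lambda>g. \<sigma> g * X * \<rho> (inv g)", OF rh M] by simp
  finally show "\<sigma> h * group_avg G \<sigma> X \<rho> = group_avg G \<sigma> X \<rho> * \<rho> h" .
qed

lemma index_group_avg_matrix_unit:
  assumes s: "is_rep G m \<sigma>" and r: "is_rep G n \<rho>" and j: "j < m" and k: "k < n"
    and i: "i < m" and l: "l < n"
  shows "group_avg G \<sigma> (matrix_unit m n j k) \<rho> $$ (i, l)
       = (\<Sum>g\<in>carrier G. \<sigma> g $$ (i, j) * \<rho> (inv g) $$ (k, l))"
  using i l index_mult_matrix_unit_mult[OF rep_carrier[OF s] rep_carrier[OF r] j k i l]
  by (auto simp: group_avg_def intro!: sum.cong)

lemma char_pairing_character: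
  assumes s: "is_rep G m \<sigma>" and r: "is_rep G n \<rho>"
  shows "char_pairing G (character G \<sigma>) (character G \<rho>)
       = (\<Sum>j<m. \<Sum>k<n. \<Sum>g\<in>carrier G. \<sigma> g $$ (j, j) * \<rho> (inv g) $$ (k, k))"
proof -
  have "char_pairing G (character G \<sigma>) (character G \<rho>)
      = (\<Sum>g\<in>carrier G. \<Sum>j<m. \<Sum>k<n. \<sigma> g $$ (j, j) * \<rho> (inv g) $$ (k, k))"
    unfolding char_pairing_def
  proof (intro sum.cong refl)
    fix g assume g: "g \<in> carrier G"
    have "dim_row (\<sigma> g) = m" and "dim_row (\<rho> (inv g)) = n"
      using rep_carrier[OF s g] rep_carrier[OF r inv_closed[OF g]] by auto
    then show "character G \<sigma> g * character G \<rho> (inv g)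
        = (\<Sum>j<m. \<Sum>k<n. \<sigma> g $$ (j, j) * \<rho> (inv g) $$ (k, k))"
      using g by (simp add: character_def mtrace_def sum_product)
  qed
  also have "\<dots> = (\<Sum>j<m. \<Sum>k<n. \<Sum>g\<in>carrier G. \<sigma> g $$ (j, j) * \<rho> (inv g) $$ (k, k))"
    by (subst sum.swap) (simp add: sum.swap[of _ "carrier G"])
  finally show ?thesis .
qed

lemma char_pairing_irreducible_distinct:
  assumes irr_\<sigma>: "irreducible_rep G m \<sigma>" and irr_\<rho>: "irreducible_rep G n \<rho>"
    and ne: "character G \<sigma> \<noteq> character G \<rho>"
  shows "char_pairing G (character G \<sigma>) (character G \<rho>) = 0"
proof -
  note s = irreducible_repD(1)[OF irr_\<sigma>] and r = irreducible_repD(1)[OF irr_\<rho>]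
  have "(\<Sum>g\<in>carrier G. \<sigma> g $$ (j, j) * \<rho> (inv g) $$ (k, k)) = 0" if j: "j < m" and k: "k < n" for j k
  proof -
    let ?T = "group_avg G \<sigma> (matrix_unit m n j k) \<rho>"
    have T: "?T \<in> carrier_mat m n" by (simp add: group_avg_carrier)
    have "?T = 0\<^sub>m m n"
      using character_eq_of_intertwiner[OF irr_\<rho> irr_\<sigma> T intertwines_group_avg[OF s r]] ne
      by auto
    then show ?thesis using index_group_avg_matrix_unit[OF s r j k j k] j k by simp
  qed
  then show ?thesis unfolding char_pairing_character[OF s r] by simp
qed

lemma mtrace_group_avg_matrix_unit:
  assumes r: "is_rep G n \<rho>" and j: "j < n" and k: "k < n"
  shows "mtrace (group_avg G \<rho> (matrix_unit n n j k) \<rho>) = (if j = k then of_nat (card (carrier G)) else 0)"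
proof -
  have "mtrace (group_avg G \<rho> (matrix_unit n n j k) \<rho>)
      = (\<Sum>i<n. \<Sum>g\<in>carrier G. \<rho> g $$ (i, j) * \<rho> (inv g) $$ (k, i))"
    unfolding mtrace_def using index_group_avg_matrix_unit[OF r r j k] by (intro sum.cong) auto
  also have "\<dots> = (\<Sum>g\<in>carrier G. \<Sum>i<n. \<rho> (inv g) $$ (k, i) * \<rho> g $$ (i, j))"
    by (subst sum.swap) (simp add: mult.commute)
  also have "\<dots> = (\<Sum>g\<in>carrier G. (\<rho> (inv g) * \<rho> g) $$ (k, j))"
  proof (intro sum.cong refl)
    fix g assume g: "g \<in> carrier G"
    have "\<rho> g \<in> carrier_mat n n" and "\<rho> (inv g) \<in> carrier_mat n n"
      using rep_carrier[OF r] g by auto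
    then show "(\<Sum>i<n. \<rho> (inv g) $$ (k, i) * \<rho> g $$ (i, j)) = (\<rho> (inv g) * \<rho> g) $$ (k, j)"
      using j k by (simp add: scalar_prod_def atLeast0LessThan carrier_matD)
  qed
  also have "\<dots> = (\<Sum>g\<in>carrier G. (if k = j then 1 else 0))"
    using rep_inv_mult[OF r] j k by (intro sum.cong refl) simp
  finally show ?thesis by auto
qed

lemma char_pairing_irreducible_self:
  assumes irr: "irreducible_rep G n \<rho>"
  shows "char_pairing G (character G \<rho>) (character G \<rho>) = of_nat (card (carrier G))"
proof -
  note r = irreducible_repD(1)[OF irr] and n = irreducible_repD(2)[OF irr]
  let ?N = "of_nat (card (carrier G)) :: complex"
  have entry: "(\<Sum>g\<in>carrier G. \<rho> g $$ (j, j) * \<rho> (inv g) $$ (k, k)) = (if j = k then ?N / of_nat n else 0)"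
    if j: "j < n" and k: "k < n" for j k
  proof -
    let ?T = "group_avg G \<rho> (matrix_unit n n j k) \<rho>"
    have T: "?T \<in> carrier_mat n n" by (simp add: group_avg_carrier)
    obtain c where c: "?T = c \<cdot>\<^sub>m 1\<^sub>m n"
      using irreducible_rep_commutant_scalar[OF irr T intertwines_group_avg[OF r r]] by auto
    have "c * of_nat n = (if j = k then ?N else 0)"
      using mtrace_group_avg_matrix_unit[OF r j k] c by (simp add: mtrace_smult_one_mat)
    then have "?T $$ (j, k) = (if j = k then ?N / of_nat n else 0)"
      using c j k n by (auto simp: field_simps)
    then show ?thesis using index_group_avg_matrix_unit[OF r r j k j k] by simp
  qed
  have "char_pairing G (character G \<rho>) (character G \<rho>) = (\<Sum>j<n. ?N / of_nat n)"
    unfolding char_pairing_character[OF r r] using entry by simp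
  also have "\<dots> = ?N" using n by simp
  finally show ?thesis .
qed

lemma char_pairing_Irr:
  assumes "\<chi> \<in> Irr G" and "\<psi> \<in> Irr G"
  shows "char_pairing G \<chi> \<psi> = (if \<chi> = \<psi> then of_nat (card (carrier G)) else 0)"
  using assms char_pairing_irreducible_self char_pairing_irreducible_distinct
  unfolding Irr_def by auto

end

lemma card_le_of_biorthogonal:
  fixes f g :: "'f \<Rightarrow> 'x \<Rightarrow> 'a :: field"
  assumes X: "finite X" and S: "finite S"
    and biorth: "\<And>a b. a \<in> S \<Longrightarrow> b \<in> S \<Longrightarrow> (\<Sum>x\<in>X. f a x * g b x) = (if a = b then 1 else 0)"
  shows "card S \<le> card X"
proof (rule ccontr)
  define N where "N = card S"
  define M where "M = card X"
  assume "\<not> card S \<le> card X"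
  then have MN: "M < N" by (simp add: N_def M_def)
  obtain \<phi> where \<phi>: "bij_betw \<phi> {0..<N} S" using ex_bij_betw_nat_finite[OF S] N_def by auto
  obtain e where e: "bij_betw e {0..<M} X" using ex_bij_betw_nat_finite[OF X] M_def by auto
  \<comment> \<open>Padded to size N, A * B = 1 forces B * A = 1, but row M of B is zero.\<close>
  define A where "A = mat N N (\<lambda>(a, b). if b < M then f (\<phi> a) (e b) else 0)"
  define B where "B = mat N N (\<lambda>(b, c). if b < M then g (\<phi> c) (e b) else 0)"
  have A: "A \<in> carrier_mat N N" and B: "B \<in> carrier_mat N N" unfolding A_def B_def by auto
  have "A * B = 1\<^sub>m N"
  proof (rule eq_matI)
    fix a c assume "a < dim_row (1\<^sub>m N)" and "c < dim_col (1\<^sub>m N)"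
    then have a: "a < N" and c: "c < N" by auto
    have "(A * B) $$ (a, c) = (\<Sum>b\<in>{0..<N}. if b < M then f (\<phi> a) (e b) * g (\<phi> c) (e b) else 0)"
      using A B a c by (auto simp: scalar_prod_def A_def B_def intro!: sum.cong)
    also have "\<dots> = (\<Sum>b\<in>{0..<M}. f (\<phi> a) (e b) * g (\<phi> c) (e b))"
    proof -
      have "{0..<N} \<inter> {b. b < M} = {0..<M}" using MN by auto
      then show ?thesis by (simp add: sum.If_cases)
    qed
    also have "\<dots> = (\<Sum>x\<in>X. f (\<phi> a) x * g (\<phi> c) x)"
      by (rule sum.reindex_bij_betw[OF e])
    also have "\<dots> = 1\<^sub>m N $$ (a, c)"
      using biorth[of "\<phi> a" "\<phi> c"] bij_betwE[OF \<phi>] \<phi> a c by (auto simp: bij_betw_def inj_on_def)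
    finally show "(A * B) $$ (a, c) = 1\<^sub>m N $$ (a, c)" .
  qed (use A B in auto)
  then have "B * A = 1\<^sub>m N" by (rule mat_mult_left_right_inverse[OF A B])
  moreover have "(B * A) $$ (M, M) = 0"
    using A B MN by (simp add: scalar_prod_def B_def)
  ultimately show False using MN by simp
qed

context group
begin

lemma finite_Irr:
  assumes fin: "finite (carrier G)"
  shows "finite (Irr G)"
proof -
  have "card S \<le> card (carrier G)" if "S \<subseteq> Irr G" and "finite S" for S
  proof (rule card_le_of_biorthogonal[OF fin \<open>finite S\<close>, where g = "\<lambda>\<psi> x. \<psi> (inv x) / of_nat (card (carrier G))"])
    fix \<chi> \<psi> assume "\<chi> \<in> S" and "\<psi> \<in> S"
    then have "char_pairing G \<chi> \<psi> = (if \<chi> = \<psi> then of_nat (card (carrier G)) else 0)"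
      using char_pairing_Irr \<open>S \<subseteq> Irr G\<close> by blast
    moreover have "card (carrier G) \<noteq> 0" using fin by (auto simp: card_eq_0_iff)
    ultimately show "(\<Sum>x\<in>carrier G. \<chi> x * (\<psi> (inv x) / of_nat (card (carrier G))))
        = (if \<chi> = \<psi> then 1 else 0)"
      by (simp add: char_pairing_def sum_divide_distrib[symmetric] times_divide_eq_right)
  qed
  then show ?thesis using finite_if_finite_subsets_card_bdd by blast
qed

end

section \<open>Linear characters\<close>

definition linear_char_on :: "('g, 'b) monoid_scheme \<Rightarrow> 'g set \<Rightarrow> ('g \<Rightarrow> complex) \<Rightarrow> bool" where
  "linear_char_on G H \<chi> \<longleftrightarrow> \<chi> \<one>\<^bsub>G\<^esub> = 1 \<and> (\<forall>a\<in>H. \<forall>b\<in>H. \<chi> (a \<otimes>\<^bsub>G\<^esub> b) = \<chi> a * \<chi> b)"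

context group
begin

lemma irreducible_rep_linear_char:
  assumes "linear_char_on G (carrier G) \<psi>"
  shows "irreducible_rep G 1 (\<lambda>x. mat 1 1 (\<lambda>_. \<psi> x))"
  unfolding irreducible_rep_def
proof (intro conjI allI impI)
  show "is_rep G 1 (\<lambda>x. mat 1 1 (\<lambda>_. \<psi> x))"
    using assms unfolding is_rep_def linear_char_on_def
    by (auto intro!: eq_matI simp: scalar_prod_def)
  fix W assume "is_subspace 1 W \<and> (\<forall>x\<in>carrier G. \<forall>w\<in>W. mat 1 1 (\<lambda>_. \<psi> x) *\<^sub>v w \<in> W)"
  then have W: "W \<subseteq> carrier_vec 1" "0\<^sub>v 1 \<in> W" "\<And>c v. v \<in> W \<Longrightarrow> c \<cdot>\<^sub>v v \<in> W"
    unfolding is_subspace_def by auto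
  show "W = {0\<^sub>v 1} \<or> W = carrier_vec 1"
  proof (cases "W = {0\<^sub>v 1}")
    case False
    then obtain v where v: "v \<in> W" "v \<noteq> 0\<^sub>v 1" using W by blast
    then have vc: "v \<in> carrier_vec 1" using W by auto
    with v have v0: "v $ 0 \<noteq> 0" by (metis eq_vecI carrier_vecD index_zero_vec less_one)
    have "w \<in> W" if w: "w \<in> carrier_vec 1" for w
    proof -
      have "w = (w $ 0 / v $ 0) \<cdot>\<^sub>v v" using w vc v0 by (intro eq_vecI) auto
      then show ?thesis using W(3)[OF v(1)] by metis
    qed
    then show ?thesis using W by auto
  qed simp
qed simp

lemma character_linear_char:
  "character G (\<lambda>x. mat 1 1 (\<lambda>_. \<psi> x)) = restrict \<psi> (carrier G)"
  unfolding character_def by (simp add: mtrace_def)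

lemma linear_char_in_Irr:
  assumes "linear_char_on G (carrier G) \<psi>"
  shows "restrict \<psi> (carrier G) \<in> Irr G"
  using irreducible_rep_linear_char[OF assms] unfolding Irr_def character_linear_char[symmetric]
  by blast

lemma trivial_char_in_Irr: "(\<lambda>x\<in>carrier G. 1) \<in> Irr G"
  using linear_char_in_Irr[of "\<lambda>_. 1"] by (simp add: linear_char_on_def)

lemma linear_char_character_degree_one:
  assumes r: "is_rep G 1 \<rho>"
  shows "linear_char_on G (carrier G) (character G \<rho>)"
  unfolding linear_char_on_def
proof (intro conjI ballI)
  show "character G \<rho> \<one> = 1" using character_one[OF r] by simp
  fix x y assume x: "x \<in> carrier G" and y: "y \<in> carrier G"
  have "\<rho> x \<in> carrier_mat 1 1" and "\<rho> y \<in> carrier_mat 1 1" using rep_carrier[OF r] x y by auto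
  then show "character G \<rho> (x \<otimes> y) = character G \<rho> x * character G \<rho> y"
    using x y by (simp add: character_def mtrace_def rep_mult[OF r] scalar_prod_def carrier_matD)
qed

lemma linear_char_nonzero:
  assumes \<chi>: "linear_char_on G (carrier G) \<chi>" and x: "x \<in> carrier G"
  shows "\<chi> x \<noteq> 0"
proof
  assume "\<chi> x = 0"
  have "1 = \<chi> (x \<otimes> inv x)" using \<chi> x by (simp add: linear_char_on_def)
  also have "\<dots> = \<chi> x * \<chi> (inv x)" using \<chi> x inv_closed[OF x] unfolding linear_char_on_def by blast
  finally show False using \<open>\<chi> x = 0\<close> by simp
qed

lemma linear_char_on_mult:
  "linear_char_on G H \<chi> \<Longrightarrow> linear_char_on G H \<psi> \<Longrightarrow> linear_char_on G H (\<lambda>x. \<psi> x * \<chi> x)"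
  unfolding linear_char_on_def by (simp add: ac_simps)

lemma linear_char_commutator:
  assumes \<chi>: "linear_char_on G (carrier G) \<chi>" and x: "x \<in> carrier G" and y: "y \<in> carrier G"
  shows "\<chi> (x \<otimes> y \<otimes> inv (y \<otimes> x)) = 1"
proof -
  have mult: "\<chi> (a \<otimes> b) = \<chi> a * \<chi> b" if "a \<in> carrier G" "b \<in> carrier G" for a b
    using \<chi> that unfolding linear_char_on_def by blast
  let ?z = "y \<otimes> x"
  have z: "?z \<in> carrier G" using x y by simp
  have "\<chi> (?z \<otimes> inv ?z) = \<chi> ?z * \<chi> (inv ?z)" by (rule mult) (use z in auto)
  then have inv: "\<chi> ?z * \<chi> (inv ?z) = 1" using \<chi> z by (simp add: linear_char_on_def)
  have "\<chi> (x \<otimes> y \<otimes> inv ?z) = \<chi> (x \<otimes> y) * \<chi> (inv ?z)" by (rule mult) (use x y z in auto)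
  also have "\<chi> (x \<otimes> y) = \<chi> ?z" using mult x y by (simp add: mult.commute)
  finally show ?thesis using inv by simp
qed

end

section \<open>Column sums of the character table\<close>

context group
begin

lemma conj_class_one: "conj_class G \<one> = {\<one>}"
  unfolding conj_class_def by (auto intro!: exI[of _ \<one>])

lemma mem_conj_class: "g \<in> carrier G \<Longrightarrow> g \<in> conj_class G g"
  unfolding conj_class_def by (auto intro!: exI[of _ \<one>])

lemma class_val_conj_class:
  assumes \<chi>: "\<chi> \<in> Irr G" and g: "g \<in> carrier G"
  shows "class_val \<chi> (conj_class G g) = \<chi> g"
proof -
  have "(SOME x. x \<in> conj_class G g) \<in> conj_class G g" using mem_conj_class[OF g] by (rule someI)
  then obtain h where h: "h \<in> carrier G" and "(SOME x. x \<in> conj_class G g) = h \<otimes> g \<otimes> inv h"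
    unfolding conj_class_def by auto
  then show ?thesis
    using \<chi> character_conj[OF _ g h] unfolding class_val_def Irr_def irreducible_rep_def by auto
qed

lemma Gamma_conj_class:
  "g \<in> carrier G \<Longrightarrow> Gamma G (conj_class G g) = (\<Sum>\<chi>\<in>Irr G. \<chi> g)"
  unfolding Gamma_def by (auto simp: class_val_conj_class intro!: sum.cong)

lemma s_table_eq_Gamma_e_plus:
  assumes fin: "finite (carrier G)"
  shows "s_table G = Gamma_e G + (\<Sum>C\<in>Conj G - {{\<one>}}. Gamma G C)"
proof -
  have one: "{\<one>} \<in> Conj G" unfolding Conj_def using conj_class_one by force
  have "s_table G = (\<Sum>C\<in>Conj G. Gamma G C)" unfolding s_table_def Gamma_def by (rule sum.swap)
  also have "\<dots> = Gamma G {\<one>} + (\<Sum>C\<in>Conj G - {{\<one>}}. Gamma G C)"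
    using fin one unfolding Conj_def by (simp add: sum.remove)
  also have "Gamma G {\<one>} = Gamma_e G"
    using Gamma_conj_class[of \<one>] by (simp add: conj_class_one Gamma_e_def)
  finally show ?thesis .
qed

lemma Gamma_vanish_off_identity_iff:
  "(\<forall>C\<in>Conj G - {{\<one>}}. Gamma G C = 0) \<longleftrightarrow> (\<forall>g\<in>carrier G. g \<noteq> \<one> \<longrightarrow> (\<Sum>\<chi>\<in>Irr G. \<chi> g) = 0)"
proof -
  have "conj_class G g \<noteq> {\<one>} \<longleftrightarrow> g \<noteq> \<one>" if "g \<in> carrier G" for g
    using mem_conj_class[OF that] conj_class_one by auto
  then have "Conj G - {{\<one>}} = conj_class G ` (carrier G - {\<one>})" unfolding Conj_def by auto
  then show ?thesis by (auto simp: Gamma_conj_class)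
qed

context
  assumes fin: "finite (carrier G)"
    and nat_columns: "\<forall>C\<in>Conj G. \<exists>k::nat. Gamma G C = of_nat k"
begin

lemma s_table_eq_Gamma_e_plus_nat:
  obtains k :: "'a set \<Rightarrow> nat" where "\<And>C. C \<in> Conj G \<Longrightarrow> Gamma G C = of_nat (k C)"
    and "s_table G = Gamma_e G + of_nat (\<Sum>C\<in>Conj G - {{\<one>}}. k C)"
proof -
  obtain k :: "'a set \<Rightarrow> nat" where k: "\<And>C. C \<in> Conj G \<Longrightarrow> Gamma G C = of_nat (k C)"
    using nat_columns by metis
  then have "(\<Sum>C\<in>Conj G - {{\<one>}}. Gamma G C) = of_nat (\<Sum>C\<in>Conj G - {{\<one>}}. k C)"
    by simp
  then show ?thesis using that k s_table_eq_Gamma_e_plus[OF fin] by simp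
qed

lemma Gamma_e_le_s_table: "Gamma_e G \<le> s_table G"
proof -
  obtain k :: "'a set \<Rightarrow> nat" where "s_table G = Gamma_e G + of_nat (\<Sum>C\<in>Conj G - {{\<one>}}. k C)"
    using s_table_eq_Gamma_e_plus_nat by blast
  then show ?thesis by (simp add: less_eq_complex_def sum_nonneg)
qed

lemma s_table_eq_Gamma_e_iff:
  "s_table G = Gamma_e G \<longleftrightarrow> (\<forall>g\<in>carrier G. g \<noteq> \<one> \<longrightarrow> (\<Sum>\<chi>\<in>Irr G. \<chi> g) = 0)"
proof -
  obtain k :: "'a set \<Rightarrow> nat" where k: "\<And>C. C \<in> Conj G \<Longrightarrow> Gamma G C = of_nat (k C)"
    and s: "s_table G = Gamma_e G + of_nat (\<Sum>C\<in>Conj G - {{\<one>}}. k C)"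
    using s_table_eq_Gamma_e_plus_nat by blast
  have "s_table G = Gamma_e G \<longleftrightarrow> (\<Sum>C\<in>Conj G - {{\<one>}}. k C) = 0"
    using s by (simp del: of_nat_sum)
  also have "\<dots> \<longleftrightarrow> (\<forall>C\<in>Conj G - {{\<one>}}. k C = 0)"
    using fin unfolding Conj_def by simp
  also have "\<dots> \<longleftrightarrow> (\<forall>C\<in>Conj G - {{\<one>}}. Gamma G C = 0)" using k by auto
  finally show ?thesis using Gamma_vanish_off_identity_iff by simp
qed

end

context
  assumes fin: "finite (carrier G)"
    and columns_vanish: "\<And>g. g \<in> carrier G \<Longrightarrow> g \<noteq> \<one> \<Longrightarrow> (\<Sum>\<chi>\<in>Irr G. \<chi> g) = 0"
begin

lemma Gamma_e_mult_degree:
  assumes \<psi>: "\<psi> \<in> Irr G"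
  shows "Gamma_e G * \<psi> \<one> = of_nat (card (carrier G))"
proof -
  have "(\<Sum>g\<in>carrier G. (\<Sum>\<chi>\<in>Irr G. \<chi> g) * \<psi> (inv g)) = (\<Sum>\<chi>\<in>Irr G. char_pairing G \<chi> \<psi>)"
    unfolding char_pairing_def by (simp add: sum_distrib_right sum.swap[of _ "carrier G"])
  also have "\<dots> = of_nat (card (carrier G))"
    using char_pairing_Irr[OF _ \<psi>] finite_Irr[OF fin] \<psi> by simp
  finally have "(\<Sum>g\<in>carrier G. (\<Sum>\<chi>\<in>Irr G. \<chi> g) * \<psi> (inv g)) = of_nat (card (carrier G))" .
  moreover have "(\<Sum>g\<in>carrier G. (\<Sum>\<chi>\<in>Irr G. \<chi> g) * \<psi> (inv g))
      = (\<Sum>g\<in>carrier G. if g = \<one> then Gamma_e G * \<psi> \<one> else 0)"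
    using columns_vanish by (intro sum.cong refl) (auto simp: Gamma_e_def)
  moreover have "\<dots> = Gamma_e G * \<psi> \<one>" using fin by simp
  ultimately show ?thesis by simp
qed

lemma Irr_linear_char_of_columns_vanish:
  assumes \<chi>: "\<chi> \<in> Irr G"
  shows "linear_char_on G (carrier G) \<chi>"
proof -
  have N0: "card (carrier G) \<noteq> 0" using fin by (auto simp: card_eq_0_iff)
  have "Gamma_e G = of_nat (card (carrier G))"
    using Gamma_e_mult_degree[OF trivial_char_in_Irr] by simp
  then have "\<chi> \<one> = 1" using Gamma_e_mult_degree[OF \<chi>] N0 by simp
  obtain n \<rho> where irr: "irreducible_rep G n \<rho>" and \<chi>_def: "\<chi> = character G \<rho>"
    using \<chi> unfolding Irr_def by auto
  have r: "is_rep G n \<rho>" using irreducible_repD(1)[OF irr] .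
  have "n = 1" using \<open>\<chi> \<one> = 1\<close> character_one[OF r] \<chi>_def by simp
  then show ?thesis using linear_char_character_degree_one r \<chi>_def by simp
qed

lemma comm_group_of_columns_vanish: "comm_group G"
proof (rule group_comm_groupI)
  fix x y assume x: "x \<in> carrier G" and y: "y \<in> carrier G"
  let ?k = "x \<otimes> y \<otimes> inv (y \<otimes> x)"
  have "(\<Sum>\<chi>\<in>Irr G. \<chi> ?k) = (\<Sum>\<chi>\<in>Irr G. 1)"
    using linear_char_commutator[OF Irr_linear_char_of_columns_vanish x y] by (rule sum.cong[OF refl])
  then have "(\<Sum>\<chi>\<in>Irr G. \<chi> ?k) = of_nat (card (Irr G))" by simp
  moreover have "card (Irr G) \<noteq> 0" using finite_Irr[OF fin] trivial_char_in_Irr by auto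
  ultimately have "?k = \<one>" using columns_vanish[of ?k] x y by auto
  then show "x \<otimes> y = y \<otimes> x" using x y by (metis inv_closed m_closed inv_equality inv_inv)
qed

end

end

section \<open>Finite abelian groups\<close>

lemma complex_root_exists: "0 < k \<Longrightarrow> \<exists>c::complex. c ^ k = z"
proof (cases "z = 0")
  case False
  assume "0 < k"
  then have "card {c. c ^ k = z} \<noteq> 0" using card_nth_roots[OF False] by simp
  then show ?thesis by (metis (mono_tags) card.empty empty_Collect_eq)
qed simp

lemma nontrivial_root_of_unity_exists: "1 < k \<Longrightarrow> \<exists>c::complex. c ^ k = 1 \<and> c \<noteq> 1"
proof -
  assume k: "1 < k"
  then have "card {c::complex. c ^ k = 1} = k" by (intro card_roots_unity_eq) simp
  then have "\<not> {c::complex. c ^ k = 1} \<subseteq> {1}"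
    using k card_mono[of "{1::complex}" "{c. c ^ k = 1}"] by auto
  then show ?thesis by auto
qed

context group
begin

lemma subgroup_nat_pow_closed: "subgroup H G \<Longrightarrow> h \<in> H \<Longrightarrow> h [^] (n::nat) \<in> H"
  by (induction n) (auto simp: subgroup.one_closed subgroup.m_closed)

lemma linear_char_on_nat_pow:
  assumes "linear_char_on G H \<chi>" and "subgroup H G" and "h \<in> H"
  shows "\<chi> (h [^] (n::nat)) = \<chi> h ^ n"
proof (induction n)
  case (Suc n)
  have "h [^] n \<in> H" using subgroup_nat_pow_closed assms(2,3) by blast
  then show ?case using Suc assms by (simp add: linear_char_on_def)
qed (use assms in \<open>simp add: linear_char_on_def\<close>)

lemma obtain_least_pos_pow_mem_subgroup:
  assumes fin: "finite (carrier G)" and H: "subgroup H G" and y: "y \<in> carrier G"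
  obtains k :: nat where "0 < k" and "y [^] k \<in> H" and "\<And>r. 0 < r \<Longrightarrow> r < k \<Longrightarrow> y [^] r \<notin> H"
proof -
  have "0 < order G" using fin unfolding order_def by (auto simp: card_gt_0_iff)
  then have ex: "\<exists>k::nat. 0 < k \<and> y [^] k \<in> H"
    using pow_order_eq_1[OF y] subgroup.one_closed[OF H] by (intro exI[of _ "order G"]) auto
  define k where "k = (LEAST k::nat. 0 < k \<and> y [^] k \<in> H)"
  have "0 < k \<and> y [^] k \<in> H" using LeastI_ex[OF ex] by (simp add: k_def)
  moreover have "y [^] r \<notin> H" if "0 < r" "r < k" for r
    using not_less_Least[of r "\<lambda>k. 0 < k \<and> y [^] k \<in> H"] that by (auto simp: k_def)
  ultimately show ?thesis using that by blast
qed

lemma dvd_of_pow_mem_subgroup: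
  assumes H: "subgroup H G" and y: "y \<in> carrier G"
    and k: "0 < k" "y [^] k \<in> H" and least: "\<And>r. 0 < r \<Longrightarrow> r < k \<Longrightarrow> y [^] r \<notin> H"
    and d: "y [^] (d::nat) \<in> H"
  shows "k dvd d"
proof -
  have "y [^] d = (y [^] k) [^] (d div k) \<otimes> y [^] (d mod k)"
    using y by (simp add: nat_pow_mult nat_pow_pow)
  moreover have q: "(y [^] k) [^] (d div k) \<in> H" using subgroup_nat_pow_closed[OF H k(2)] .
  ultimately have "y [^] (d mod k) = inv ((y [^] k) [^] (d div k)) \<otimes> y [^] d"
    using y subgroup.subset[OF H] by (auto simp: m_assoc[symmetric])
  then have "y [^] (d mod k) \<in> H"
    using subgroup.m_closed[OF H subgroup.m_inv_closed[OF H q] d] by simp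
  then have "d mod k = 0" using least[of "d mod k"] k(1) by (meson mod_less_divisor not_gr_zero)
  then show ?thesis by auto
qed

end

locale finite_comm_group = comm_group +
  assumes finite_carrier: "finite (carrier G)"

definition adjoin :: "('g, 'b) monoid_scheme \<Rightarrow> 'g set \<Rightarrow> 'g \<Rightarrow> 'g set" where
  "adjoin G H y = {h \<otimes>\<^bsub>G\<^esub> y [^]\<^bsub>G\<^esub> (j::nat) | h j. h \<in> H}"

context finite_comm_group
begin

lemma subset_adjoin: "subgroup H G \<Longrightarrow> H \<subseteq> adjoin G H y"
  unfolding adjoin_def by (force dest: subgroup.mem_carrier intro: exI[of _ "0::nat"])

lemma mem_adjoin: "subgroup H G \<Longrightarrow> y \<in> carrier G \<Longrightarrow> y \<in> adjoin G H y"
  unfolding adjoin_def by (force intro: subgroup.one_closed exI[of _ "1::nat"])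

lemma subgroup_adjoin:
  assumes H: "subgroup H G" and y: "y \<in> carrier G"
  shows "subgroup (adjoin G H y) G"
proof (rule subgroupI)
  show "adjoin G H y \<subseteq> carrier G" unfolding adjoin_def using subgroup.mem_carrier[OF H] y by auto
  show "adjoin G H y \<noteq> {}" using mem_adjoin[OF H y] by blast
next
  fix a assume "a \<in> adjoin G H y"
  then obtain h j where h: "h \<in> H" and a: "a = h \<otimes> y [^] (j::nat)" unfolding adjoin_def by auto
  define N where "N = order G"
  have "0 < N" using finite_carrier unfolding N_def order_def by (auto simp: card_gt_0_iff)
  then have "y [^] (N - 1) \<otimes> y = \<one>"
    using pow_order_eq_1[OF y] y by (simp add: N_def flip: nat_pow_Suc)
  then have iy: "inv y = y [^] (N - 1)" using y by (intro inv_equality) auto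
  have "inv a = inv h \<otimes> inv y [^] j"
    using a subgroup.mem_carrier[OF H h] y by (simp add: inv_mult nat_pow_inv)
  also have "\<dots> = inv h \<otimes> y [^] ((N - 1) * j)" using iy y by (simp add: nat_pow_pow)
  finally show "inv a \<in> adjoin G H y" unfolding adjoin_def using subgroup.m_inv_closed[OF H h] by blast
next
  fix a b assume "a \<in> adjoin G H y" "b \<in> adjoin G H y"
  then obtain h1 j1 h2 j2 where h: "h1 \<in> H" "h2 \<in> H"
    and ab: "a = h1 \<otimes> y [^] (j1::nat)" "b = h2 \<otimes> y [^] (j2::nat)" unfolding adjoin_def by auto
  then have "a \<otimes> b = (h1 \<otimes> h2) \<otimes> y [^] (j1 + j2)"
    using y subgroup.mem_carrier[OF H] by (simp add: nat_pow_mult[symmetric] m_ac)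
  then show "a \<otimes> b \<in> adjoin G H y" unfolding adjoin_def using subgroup.m_closed[OF H h] by blast
qed

text \<open>Here k is the order of y modulo H, and \<chi> is extended to H<y> by sending y to a k-th root c
  of \<chi>(y^k).\<close>

context
  fixes H \<chi> y k c
  assumes H: "subgroup H G" and \<chi>: "linear_char_on G H \<chi>" and y: "y \<in> carrier G"
    and k: "0 < k" "y [^] k \<in> H" and least: "\<And>r. 0 < r \<Longrightarrow> r < k \<Longrightarrow> y [^] r \<notin> H"
    and c: "c ^ k = \<chi> (y [^] k)"
begin

lemma linear_char_adjoin_well_defined:
  assumes h: "h1 \<in> H" "h2 \<in> H" and eq: "h1 \<otimes> y [^] (j1::nat) = h2 \<otimes> y [^] (j2::nat)"
  shows "\<chi> h1 * c ^ j1 = \<chi> h2 * c ^ j2"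
proof -
  have le_case: "\<chi> h1 * c ^ j1 = \<chi> h2 * c ^ j2"
    if h: "h1 \<in> H" "h2 \<in> H" and eq: "h1 \<otimes> y [^] j1 = h2 \<otimes> y [^] j2" and le: "j2 \<le> j1"
    for h1 h2 and j1 j2 :: nat
  proof -
    define d where "d = j1 - j2"
    have j1: "j1 = d + j2" using le d_def by simp
    have "(h1 \<otimes> y [^] d) \<otimes> y [^] j2 = h2 \<otimes> y [^] j2"
      using eq j1 subgroup.mem_carrier[OF H h(1)] y by (simp add: nat_pow_mult[symmetric] m_assoc)
    then have h2: "h2 = h1 \<otimes> y [^] d" using subgroup.mem_carrier[OF H] h y by simp
    then have "y [^] d = inv h1 \<otimes> h2"
      using subgroup.mem_carrier[OF H h(1)] y by (simp add: m_assoc[symmetric])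
    then have "y [^] d \<in> H" using subgroup.m_closed[OF H subgroup.m_inv_closed[OF H h(1)] h(2)] by simp
    then obtain q where q: "d = k * q" using dvd_of_pow_mem_subgroup[OF H y k least] by blast
    then have "\<chi> (y [^] d) = c ^ d"
      using linear_char_on_nat_pow[OF \<chi> H k(2)] c y by (simp add: nat_pow_pow power_mult)
    moreover have "\<chi> h2 = \<chi> h1 * \<chi> (y [^] d)"
      using h2 \<chi> h \<open>y [^] d \<in> H\<close> unfolding linear_char_on_def by metis
    ultimately show ?thesis using j1 by (simp add: power_add ac_simps)
  qed
  show ?thesis
  proof (cases "j2 \<le> j1")
    case True then show ?thesis using le_case[OF h eq] by simp
  next
    case False then show ?thesis using le_case[OF h(2,1) eq[symmetric]] by simp
  qed
qed

lemma linear_char_extend_adjoin: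
  obtains \<chi>' where "linear_char_on G (adjoin G H y) \<chi>'" and "\<forall>h\<in>H. \<chi>' h = \<chi> h" and "\<chi>' y = c"
proof -
  define \<chi>' where "\<chi>' = (\<lambda>z. SOME v. \<exists>h j. h \<in> H \<and> z = h \<otimes> y [^] (j::nat) \<and> v = \<chi> h * c ^ j)"
  have val: "\<chi>' (h \<otimes> y [^] j) = \<chi> h * c ^ j" if h: "h \<in> H" for h and j :: nat
  proof -
    let ?P = "\<lambda>v. \<exists>h' j'. h' \<in> H \<and> h \<otimes> y [^] j = h' \<otimes> y [^] (j'::nat) \<and> v = \<chi> h' * c ^ j'"
    have "?P (\<chi>' (h \<otimes> y [^] j))" unfolding \<chi>'_def by (rule someI_ex) (use h in blast)
    then show ?thesis using linear_char_adjoin_well_defined[OF h] by metis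
  qed
  have ext: "\<chi>' h = \<chi> h" if h: "h \<in> H" for h
    using val[OF h, of 0] subgroup.mem_carrier[OF H h] by auto
  have "\<chi>' y = c"
    using val[OF subgroup.one_closed[OF H], of 1] y \<chi> by (simp add: linear_char_on_def)
  moreover have "linear_char_on G (adjoin G H y) \<chi>'"
    unfolding linear_char_on_def
  proof (intro conjI ballI)
    show "\<chi>' \<one> = 1" using ext[OF subgroup.one_closed[OF H]] \<chi> by (simp add: linear_char_on_def)
    fix a b assume "a \<in> adjoin G H y" "b \<in> adjoin G H y"
    then obtain h1 j1 h2 j2 where h: "h1 \<in> H" "h2 \<in> H"
      and ab: "a = h1 \<otimes> y [^] (j1::nat)" "b = h2 \<otimes> y [^] (j2::nat)" unfolding adjoin_def by auto
    then have "a \<otimes> b = (h1 \<otimes> h2) \<otimes> y [^] (j1 + j2)"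
      using y subgroup.mem_carrier[OF H] by (simp add: nat_pow_mult[symmetric] m_ac)
    then have "\<chi>' (a \<otimes> b) = \<chi> (h1 \<otimes> h2) * c ^ (j1 + j2)"
      using val subgroup.m_closed[OF H h] by simp
    also have "\<dots> = (\<chi> h1 * c ^ j1) * (\<chi> h2 * c ^ j2)"
      using \<chi> h unfolding linear_char_on_def by (simp add: power_add ac_simps)
    finally show "\<chi>' (a \<otimes> b) = \<chi>' a * \<chi>' b" using val h ab by simp
  qed
  ultimately show ?thesis using that ext by blast
qed

end

lemma linear_char_extend:
  "subgroup H G \<Longrightarrow> linear_char_on G H \<chi> \<Longrightarrow>
     \<exists>\<psi>. linear_char_on G (carrier G) \<psi> \<and> (\<forall>h\<in>H. \<psi> h = \<chi> h)"
proof (induction "card (carrier G - H)" arbitrary: H \<chi> rule: less_induct)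
  case less
  show ?case
  proof (cases "H = carrier G")
    case True
    then show ?thesis using less.prems(2) by (intro exI[of _ \<chi>]) simp
  next
    case False
    then obtain y where y: "y \<in> carrier G" "y \<notin> H" using subgroup.subset[OF less.prems(1)] by blast
    obtain k :: nat where k: "0 < k" "y [^] k \<in> H" "\<And>r. 0 < r \<Longrightarrow> r < k \<Longrightarrow> y [^] r \<notin> H"
      using obtain_least_pos_pow_mem_subgroup[OF finite_carrier less.prems(1) y(1)] by blast
    obtain c where c: "c ^ k = \<chi> (y [^] k)" using complex_root_exists[OF k(1)] by blast
    obtain \<chi>' where \<chi>': "linear_char_on G (adjoin G H y) \<chi>'" and ext: "\<forall>h\<in>H. \<chi>' h = \<chi> h"
      using linear_char_extend_adjoin[OF less.prems y(1) k c] by blast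
    have "carrier G - adjoin G H y \<subset> carrier G - H"
      using subset_adjoin[OF less.prems(1)] mem_adjoin[OF less.prems(1) y(1)] y by blast
    then have "card (carrier G - adjoin G H y) < card (carrier G - H)"
      using finite_carrier by (intro psubset_card_mono) auto
    then obtain \<psi> where "linear_char_on G (carrier G) \<psi>" "\<forall>h\<in>adjoin G H y. \<psi> h = \<chi>' h"
      using less.hyps[OF _ subgroup_adjoin[OF less.prems(1) y(1)] \<chi>'] by blast
    then show ?thesis using ext subset_adjoin[OF less.prems(1), of y] by (intro exI[of _ \<psi>]) auto
  qed
qed

lemma linear_char_separates:
  assumes g: "g \<in> carrier G" and g1: "g \<noteq> \<one>"
  obtains \<psi> where "linear_char_on G (carrier G) \<psi>" and "\<psi> g \<noteq> 1"
proof -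
  have H: "subgroup {\<one>} G" by (rule triv_subgroup)
  have triv: "linear_char_on G {\<one>} (\<lambda>_. 1)" by (simp add: linear_char_on_def)
  obtain k :: nat where k: "0 < k" "g [^] k \<in> {\<one>}" "\<And>r. 0 < r \<Longrightarrow> r < k \<Longrightarrow> g [^] r \<notin> {\<one>}"
    using obtain_least_pos_pow_mem_subgroup[OF finite_carrier H g] by blast
  have "k \<noteq> 1" using k(2) g g1 by auto
  then have "1 < k" using k(1) by simp
  then obtain c :: complex where c: "c ^ k = 1" "c \<noteq> 1"
    using nontrivial_root_of_unity_exists by blast
  obtain \<chi>' where \<chi>': "linear_char_on G (adjoin G {\<one>} g) \<chi>'" and "\<chi>' g = c"
    using linear_char_extend_adjoin[OF H triv g k] c by auto
  moreover obtain \<psi> where "linear_char_on G (carrier G) \<psi>" "\<forall>h\<in>adjoin G {\<one>} g. \<psi> h = \<chi>' h"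
    using linear_char_extend[OF subgroup_adjoin[OF H g] \<chi>'] by blast
  ultimately show ?thesis using that mem_adjoin[OF H g] c(2) by auto
qed

lemma irreducible_rep_degree_one:
  assumes irr: "irreducible_rep G n \<rho>"
  shows "n = 1"
proof (rule ccontr)
  assume "n \<noteq> 1"
  then have n: "1 < n" using irreducible_repD(2)[OF irr] by simp
  note r = irreducible_repD(1)[OF irr]
  define e where "e = (unit_vec n 0 :: complex vec)"
  have e: "e \<in> carrier_vec n" by (simp add: e_def)
  define W where "W = {a \<cdot>\<^sub>v e | a. True}"
  have "\<rho> x *\<^sub>v w \<in> W" if x: "x \<in> carrier G" and w: "w \<in> W" for x w
  proof -
    have "\<rho> z * \<rho> x = \<rho> x * \<rho> z" if z: "z \<in> carrier G" for z
      using rep_mult[OF r x z] rep_mult[OF r z x] m_comm[OF x z] by simp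
    then obtain c where c: "\<rho> x = c \<cdot>\<^sub>m 1\<^sub>m n"
      using irreducible_rep_commutant_scalar[OF irr rep_carrier[OF r x]] unfolding intertwines_def by blast
    obtain a where "w = a \<cdot>\<^sub>v e" using w unfolding W_def by auto
    then have "\<rho> x *\<^sub>v w = (c * a) \<cdot>\<^sub>v e" using c e by (auto simp: smult_smult_assoc)
    then show ?thesis unfolding W_def by auto
  qed
  then have "invariant_subspace G n \<rho> W"
    using is_subspace_line[OF e] unfolding invariant_subspace_def W_def by blast
  moreover have "e \<in> W" unfolding W_def using e by (auto intro!: exI[of _ 1])
  moreover have "e \<noteq> 0\<^sub>v n" unfolding e_def using n by simp
  ultimately have "W = carrier_vec n" using irreducible_repD(3)[OF irr] by blast
  then have "unit_vec n 1 \<in> W" by simp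
  then obtain a where "unit_vec n 1 = a \<cdot>\<^sub>v e" unfolding W_def by auto
  then have "(unit_vec n 1 :: complex vec) $ 1 = (a \<cdot>\<^sub>v e) $ 1" by simp
  then show False using n by (simp add: e_def)
qed

lemma Irr_linear_char:
  assumes \<chi>: "\<chi> \<in> Irr G"
  shows "linear_char_on G (carrier G) \<chi>"
proof -
  obtain n \<rho> where irr: "irreducible_rep G n \<rho>" and "\<chi> = character G \<rho>"
    using \<chi> unfolding Irr_def by auto
  then show ?thesis
    using linear_char_character_degree_one irreducible_repD(1)[OF irr] irreducible_rep_degree_one[OF irr]
    by simp
qed

lemma column_sum_vanishes:
  assumes g: "g \<in> carrier G" and g1: "g \<noteq> \<one>"
  shows "(\<Sum>\<chi>\<in>Irr G. \<chi> g) = 0"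
proof -
  obtain \<psi> where \<psi>: "linear_char_on G (carrier G) \<psi>" and \<psi>g: "\<psi> g \<noteq> 1"
    using linear_char_separates[OF g g1] by blast
  define \<Phi> where "\<Phi> = (\<lambda>\<chi>. \<lambda>x\<in>carrier G. \<psi> x * \<chi> x)"
  have maps: "\<Phi> ` Irr G \<subseteq> Irr G"
    using linear_char_in_Irr[OF linear_char_on_mult[OF Irr_linear_char \<psi>]] unfolding \<Phi>_def by blast
  have "inj_on \<Phi> (Irr G)"
  proof (rule inj_onI)
    fix \<chi> \<chi>' assume "\<chi> \<in> Irr G" "\<chi>' \<in> Irr G" and eq: "\<Phi> \<chi> = \<Phi> \<chi>'"
    have "\<chi> x = \<chi>' x" if "x \<in> carrier G" for x
      using fun_cong[OF eq, of x] linear_char_nonzero[OF \<psi> that] that by (simp add: \<Phi>_def)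
    then show "\<chi> = \<chi>'"
      using Irr_extensional \<open>\<chi> \<in> Irr G\<close> \<open>\<chi>' \<in> Irr G\<close> by (intro extensionalityI) auto
  qed
  then have "\<Phi> ` Irr G = Irr G" using endo_inj_surj[OF finite_Irr[OF finite_carrier] maps] by blast
  then have "(\<Sum>\<chi>\<in>Irr G. \<chi> g) = (\<Sum>\<chi>\<in>Irr G. \<Phi> \<chi> g)"
    using sum.reindex[OF \<open>inj_on \<Phi> (Irr G)\<close>, of "\<lambda>\<chi>. \<chi> g"] by simp
  also have "\<dots> = \<psi> g * (\<Sum>\<chi>\<in>Irr G. \<chi> g)" using g by (simp add: \<Phi>_def sum_distrib_left)
  finally have "(1 - \<psi> g) * (\<Sum>\<chi>\<in>Irr G. \<chi> g) = 0" by (simp add: algebra_simps)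
  then show ?thesis using \<psi>g by simp
qed

end

theorem proposition2p6:
  fixes G :: "('g, 'b) monoid_scheme"
  assumes "group G" and "finite (carrier G)"
    and "\<forall>C\<in>Conj G. \<exists>k::nat. Gamma G C = of_nat k"
  shows "Gamma_e G \<le> s_table G \<and>
         (totally_orthogonal G \<longrightarrow>
            (Gamma_e G \<le> s_table G \<and> (s_table G = Gamma_e G \<longleftrightarrow> comm_group G)))"
proof -
  interpret group G by (rule assms(1))
  have "s_table G = Gamma_e G \<longleftrightarrow> (\<forall>g\<in>carrier G. g \<noteq> \<one>\<^bsub>G\<^esub> \<longrightarrow> (\<Sum>\<chi>\<in>Irr G. \<chi> g) = 0)"
    using s_table_eq_Gamma_e_iff[OF assms(2,3)] .
  also have "\<dots> \<longleftrightarrow> comm_group G"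
  proof
    assume "\<forall>g\<in>carrier G. g \<noteq> \<one>\<^bsub>G\<^esub> \<longrightarrow> (\<Sum>\<chi>\<in>Irr G. \<chi> g) = 0"
    then show "comm_group G" using comm_group_of_columns_vanish[OF assms(2)] by blast
  next
    assume "comm_group G"
    then interpret finite_comm_group G
      using assms(2) by (simp add: finite_comm_group_def finite_comm_group_axioms_def)
    show "\<forall>g\<in>carrier G. g \<noteq> \<one>\<^bsub>G\<^esub> \<longrightarrow> (\<Sum>\<chi>\<in>Irr G. \<chi> g) = 0" using column_sum_vanishes by blast
  qed
  finally show ?thesis using Gamma_e_le_s_table[OF assms(2,3)] by blast
qed

end
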